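(* Let $U$ be a nonempty finite set, $R\subseteq U\times U$ serial and transitive, and $cl$ the closure operator of the matroid $M(Reg(U,R))$. Then for every $e\in U\setminus\bigcup\mathcal{A}(Reg(U,R))$, $cl(\{e\})=\{e\}$.
   Context: $R_s(x)=\{y\in U\mid xRy\}$; $\underline{R}(X)=\{x\mid R_s(x)\subseteq X\}$, $\overline{R}(X)=\{x\mid R_s(x)\cap X\neq\emptyset\}$; $X$ is regular if $X=\underline{R}(\overline{R}(X))$, and $Reg(U,R)$ is the lattice of regular sets under inclusion, with least element $\emptyset$. $\mathcal{A}(Reg(U,R))$ is the set of atoms (elements covering $\emptyset$) of this lattice. $h(A)$ is the length of a maximal chain in $[\emptyset,A]$. $M(Reg(U,R))$ is the matroid on $U$ with independent sets $\{X\subseteq U\mid h(Y)\ge|X\cap Y|\ \forall Y\in Reg(U,R)\}$, rank function $r(X)=\max\{|I|\mid I\subseteq X \text{ independent}\}$, and closure operator $cl(X)=\{u\in U\mid r(X\cup\{u\})=r(X)\}$. *)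

theory Defs
  imports Main
begin

definition succ_set :: "'a set \<Rightarrow> ('a \<times> 'a) set \<Rightarrow> 'a \<Rightarrow> 'a set" where
  "succ_set U R x = {y \<in> U. (x, y) \<in> R}"

definition lower_approx :: "'a set \<Rightarrow> ('a \<times> 'a) set \<Rightarrow> 'a set \<Rightarrow> 'a set" where
  "lower_approx U R X = {x \<in> U. succ_set U R x \<subseteq> X}"

definition upper_approx :: "'a set \<Rightarrow> ('a \<times> 'a) set \<Rightarrow> 'a set \<Rightarrow> 'a set" where
  "upper_approx U R X = {x \<in> U. succ_set U R x \<inter> X \<noteq> {}}"

definition regular :: "'a set \<Rightarrow> ('a \<times> 'a) set \<Rightarrow> 'a set \<Rightarrow> bool" where
  "regular U R X \<longleftrightarrow> X = lower_approx U R (upper_approx U R X)"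

definition Reg :: "'a set \<Rightarrow> ('a \<times> 'a) set \<Rightarrow> 'a set set" where
  "Reg U R = {X. X \<subseteq> U \<and> regular U R X}"

definition atoms :: "'a set \<Rightarrow> ('a \<times> 'a) set \<Rightarrow> 'a set set" where
  "atoms U R = {A \<in> Reg U R. A \<noteq> {} \<and> \<not> (\<exists>B \<in> Reg U R. {} \<subset> B \<and> B \<subset> A)}"

definition serial_on :: "'a set \<Rightarrow> ('a \<times> 'a) set \<Rightarrow> bool" where
  "serial_on U R \<longleftrightarrow> (\<forall>x \<in> U. \<exists>y \<in> U. (x, y) \<in> R)"

text \<open>Chains of the lattice inside the interval [{}, A]; a chain with k+1 elements has length k.\<close>
definition reg_chain :: "'a set \<Rightarrow> ('a \<times> 'a) set \<Rightarrow> 'a set \<Rightarrow> 'a set set \<Rightarrow> bool" where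
  "reg_chain U R A C \<longleftrightarrow> C \<subseteq> {Y \<in> Reg U R. Y \<subseteq> A} \<and> C \<noteq> {}
      \<and> (\<forall>X \<in> C. \<forall>Y \<in> C. X \<subseteq> Y \<or> Y \<subseteq> X)"

text \<open>h(A): length of a maximal chain in [{}, A], taken as the length of a longest chain
  (a longest chain is always maximal).\<close>
definition height :: "'a set \<Rightarrow> ('a \<times> 'a) set \<Rightarrow> 'a set \<Rightarrow> nat" where
  "height U R A = Max {card C - 1 | C. reg_chain U R A C}"

definition indep :: "'a set \<Rightarrow> ('a \<times> 'a) set \<Rightarrow> 'a set \<Rightarrow> bool" where
  "indep U R X \<longleftrightarrow> X \<subseteq> U \<and> (\<forall>Y \<in> Reg U R. height U R Y \<ge> card (X \<inter> Y))"

definition rank :: "'a set \<Rightarrow> ('a \<times> 'a) set \<Rightarrow> 'a set \<Rightarrow> nat" where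
  "rank U R X = Max {card I | I. I \<subseteq> X \<and> indep U R I}"

definition mclosure :: "'a set \<Rightarrow> ('a \<times> 'a) set \<Rightarrow> 'a set \<Rightarrow> 'a set" where
  "mclosure U R X = {u \<in> U. rank U R (X \<union> {u}) = rank U R X}"

end

theory Submission
  imports Defs
begin

(* Let e lie in no atom of Reg(U,R).  Every nonempty regular set Y
   containing e is then not an atom, so some regular B with {} < B < Y exists and
   the chain {} < B < Y shows h(Y) >= 2; every nonempty regular set has h >= 1
   via the chain {} < Y.  Hence a set {e, u} meets any regular Y in at most h(Y)
   points, i.e. {e, u} is independent for every u in U.  Consequently
   r({e}) <= 1 while r({e, u}) = 2 for u <> e, so no u <> e lies in cl({e}).  Finiteness of U and
   seriality of R (which makes {} regular) are used. *)

text \<open>Any chain in the interval [{}, A] bounds the height of A from below; finiteness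
  of U makes the set of chain lengths finite, so the maximum exists.\<close>
lemma height_ge_chain:
  assumes "finite U" and "reg_chain U R A C"
  shows "card C - 1 \<le> height U R A"
proof -
  have "{card C - 1 | C. reg_chain U R A C} \<subseteq> (\<lambda>C. card C - 1) ` Pow (Pow U)"
  proof
    fix k assume "k \<in> {card C - 1 | C. reg_chain U R A C}"
    then obtain C where "k = card C - 1" and "reg_chain U R A C" by blast
    moreover from this have "C \<in> Pow (Pow U)" by (auto simp: reg_chain_def Reg_def)
    ultimately show "k \<in> (\<lambda>C. card C - 1) ` Pow (Pow U)" by blast
  qed
  then have "finite {card C - 1 | C. reg_chain U R A C}"
    using \<open>finite U\<close> by (meson finite_Pow_iff finite_imageI finite_subset)
  then show ?thesis
    unfolding height_def using assms(2) by (intro Max_ge) auto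
qed

lemma empty_regular:
  assumes "serial_on U R" and "R \<subseteq> U \<times> U"
  shows "{} \<in> Reg U R"
  using assms
  unfolding Reg_def regular_def lower_approx_def upper_approx_def succ_set_def serial_on_def
  by auto

lemma height_nonempty_ge_1:
  assumes "finite U" and "{} \<in> Reg U R" and "Y \<in> Reg U R" and "Y \<noteq> {}"
  shows "1 \<le> height U R Y"
proof -
  have "reg_chain U R Y {{}, Y}"
    using assms unfolding reg_chain_def by auto
  then have "card {{}, Y} - 1 \<le> height U R Y"
    using height_ge_chain \<open>finite U\<close> by blast
  moreover have "card {{}, Y} = 2"
    using \<open>Y \<noteq> {}\<close> by simp
  ultimately show ?thesis by simp
qed

lemma height_non_atom_ge_2:
  assumes "finite U" and "{} \<in> Reg U R" and "Y \<in> Reg U R" and "Y \<noteq> {}"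
    and "Y \<notin> atoms U R"
  shows "2 \<le> height U R Y"
proof -
  obtain B where B: "B \<in> Reg U R" "{} \<subset> B" "B \<subset> Y"
    using assms(3-5) unfolding atoms_def by blast
  have "reg_chain U R Y {{}, B, Y}"
    using assms(2,3) B unfolding reg_chain_def by auto
  then have "card {{}, B, Y} - 1 \<le> height U R Y"
    using height_ge_chain \<open>finite U\<close> by blast
  moreover have "card {{}, B, Y} = 3"
  proof -
    have "{} \<noteq> Y" using B by blast
    then show ?thesis using B by (simp add: psubset_eq)
  qed
  ultimately show ?thesis by simp
qed

lemma indep_sizes_finite_nonempty:
  assumes "finite X"
  shows "finite {card I | I. I \<subseteq> X \<and> indep U R I}"
    and "0 \<in> {card I | I. I \<subseteq> X \<and> indep U R I}"
proof -
  have "{card I | I. I \<subseteq> X \<and> indep U R I} \<subseteq> card ` Pow X" by auto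
  then show "finite {card I | I. I \<subseteq> X \<and> indep U R I}"
    using assms by (meson finite_Pow_iff finite_imageI finite_subset)
  have "indep U R {}" by (simp add: indep_def)
  then show "0 \<in> {card I | I. I \<subseteq> X \<and> indep U R I}" by force
qed

lemma rank_le_card:
  assumes "finite X"
  shows "rank U R X \<le> card X"
proof -
  have "\<forall>k \<in> {card I | I. I \<subseteq> X \<and> indep U R I}. k \<le> card X"
    using card_mono[OF assms] by blast
  then show ?thesis
    unfolding rank_def using indep_sizes_finite_nonempty[OF assms, of U R]
    by (subst Max_le_iff) blast+
qed

lemma rank_ge_indep:
  assumes "finite X" and "I \<subseteq> X" and "indep U R I"
  shows "card I \<le> rank U R X"
  unfolding rank_def using assms indep_sizes_finite_nonempty(1)[OF assms(1)]
  by (intro Max_ge) auto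

text \<open>If e lies in no atom, then {e, u} is independent for every u in U: a regular set
  containing e has height at least 2, and one containing only u has height at least 1.\<close>
lemma indep_pair_outside_atoms:
  assumes "finite U" and "{} \<in> Reg U R"
    and e: "e \<in> U - \<Union> (atoms U R)" and "u \<in> U"
  shows "indep U R {e, u}"
  unfolding indep_def
proof (intro conjI ballI)
  show "{e, u} \<subseteq> U" using e \<open>u \<in> U\<close> by blast
next
  fix Y assume Y: "Y \<in> Reg U R"
  show "card ({e, u} \<inter> Y) \<le> height U R Y"
  proof (cases "e \<in> Y")
    case True
    then have "Y \<notin> atoms U R" using e by blast
    then have "2 \<le> height U R Y"
      using height_non_atom_ge_2 assms(1,2) Y True by blast
    moreover have "card ({e, u} \<inter> Y) \<le> card {e, u}"
      by (intro card_mono) auto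
    moreover have "card {e, u} \<le> 2"
      by (simp add: card_insert_if)
    ultimately show ?thesis by linarith
  next
    case False
    then have "{e, u} \<inter> Y = (if u \<in> Y then {u} else {})" by auto
    then show ?thesis
      using height_nonempty_ge_1[OF assms(1,2) Y] by auto
  qed
qed

theorem proposition5:
  fixes U :: "'a set" and R :: "('a \<times> 'a) set"
  assumes "finite U" and "U \<noteq> {}"
    and "R \<subseteq> U \<times> U" and "serial_on U R" and "trans R"
    and "e \<in> U - \<Union> (atoms U R)"
  shows "mclosure U R {e} = {e}"
proof -
  have empty_reg: "{} \<in> Reg U R" using empty_regular assms(3,4) by blast
  have rank_e: "rank U R {e} \<le> 1"
    using rank_le_card[of "{e}"] by simp
  have rank_pair: "2 \<le> rank U R {e, u}" if "u \<in> U" "u \<noteq> e" for u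
    using rank_ge_indep[of "{e, u}" "{e, u}" U R]
      indep_pair_outside_atoms[OF assms(1) empty_reg assms(6) \<open>u \<in> U\<close>] that by simp
  have "u = e" if "u \<in> mclosure U R {e}" for u
  proof (rule ccontr)
    assume "u \<noteq> e"
    moreover have "u \<in> U" "rank U R {e, u} = rank U R {e}"
      using that by (auto simp: mclosure_def insert_commute)
    ultimately show False using rank_e rank_pair by fastforce
  qed
  moreover have "e \<in> mclosure U R {e}" using assms(6) by (simp add: mclosure_def)
  ultimately show ?thesis by blast
qed

end
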